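(* Consider a parallel system (so $\phi(s)=1$ if and only if $s_k=1$ for at least one $k$), with an arbitrary joint prior distribution of the component states and with inspection error rates $\epsilon_{FA},\epsilon_{FS}\in[0,1/2)$ identical for all components. For any two components $c_i,c_j$ with $p_i\le p_j$, we have $I_i\supseteq I_j$, i.e. $p_{\omega|y_i=1}\le p_{\omega|y_j=1}\le p_{\omega|y_j=0}\le p_{\omega|y_i=0}$, and consequently $\mathrm{VoI}_G(i)\ge\mathrm{VoI}_G(j)$ for every concave function $l^*$. In particular, the most reliable component (the one with the lowest marginal failure probability) has the highest $\mathrm{VoI}_G$, regardless of $l^*$.
   Context: A system consists of $N$ binary components $c_1,\dots,c_N$ with random joint state $s=(s_1,\dots,s_N)\in\{0,1\}^N$ ($s_k=1$: working; $s_k=0$: failed), with arbitrary prior distribution $p_s$. The system state is $u=\phi(s)$ ($u=0$: system failure), $p_\pi=\mathbb{P}[u=0]$, and $p_k=\mathbb{P}[s_k=0]$ is the marginal failure probability of $c_k$. Inspecting $c_k$ yields a binary observation $y_k$ (alarm $y_k=0$, silence $y_k=1$) which, given $s$, depends only on $s_k$, with $\mathbb{P}[y_k=1\mid s_k=0]=\epsilon_{FS}$ and $\mathbb{P}[y_k=0\mid s_k=1]=\epsilon_{FA}$. Then $h_k=\mathbb{P}[y_k=0]=\epsilon_{FA}+(1-\epsilon_{FA}-\epsilon_{FS})p_k$; posterior system failure probabilities are $p_{\omega|y_k=b}=\mathbb{P}[u=0\mid y_k=b]$ (defined when the conditioning event has positive probability), and $I_k=[p_{\omega|y_k=1},p_{\omega|y_k=0}]$.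 Global metric: for a concave $l^*:[0,1]\to\mathbb{R}$, $L^G_\pi=l^*(p_\pi)$, $L^G_\omega(k)=h_k\,l^*(p_{\omega|y_k=0})+(1-h_k)\,l^*(p_{\omega|y_k=1})$ (a term with zero probability is omitted), and $\mathrm{VoI}_G(k)=L^G_\pi-L^G_\omega(k)$. *)

theory Defs
  imports "HOL-Analysis.Analysis" "HOL-Probability.Probability"
begin

text \<open>A joint state is s :: 'n => bool
 (True = working, i.e. s_k = 1; False = failed). Observations: True = silence (y=1),
 False = alarm (y=0).\<close>

definition parallel_phi :: "('n::finite \<Rightarrow> bool) \<Rightarrow> bool" where
  "parallel_phi s = (\<exists>k. s k)"

definition obs_pmf :: "real \<Rightarrow> real \<Rightarrow> bool \<Rightarrow> bool pmf" where
  "obs_pmf eFA eFS sk = (if sk then bernoulli_pmf (1 - eFA) else bernoulli_pmf eFS)"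

definition joint_pmf :: "('n \<Rightarrow> bool) pmf \<Rightarrow> real \<Rightarrow> real \<Rightarrow> 'n \<Rightarrow> (('n \<Rightarrow> bool) \<times> bool) pmf" where
  "joint_pmf ps eFA eFS k = bind_pmf ps (\<lambda>s. map_pmf (\<lambda>y. (s, y)) (obs_pmf eFA eFS (s k)))"

definition marg_fail :: "('n \<Rightarrow> bool) pmf \<Rightarrow> 'n \<Rightarrow> real" where
  "marg_fail ps k = measure_pmf.prob ps {s. \<not> s k}"

definition prior_fail :: "('n::finite \<Rightarrow> bool) pmf \<Rightarrow> real" where
  "prior_fail ps = measure_pmf.prob ps {s. \<not> parallel_phi s}"

definition obs_prob :: "('n \<Rightarrow> bool) pmf \<Rightarrow> real \<Rightarrow> real \<Rightarrow> 'n \<Rightarrow> bool \<Rightarrow> real" where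
  "obs_prob ps eFA eFS k b = measure_pmf.prob (joint_pmf ps eFA eFS k) {(s, y). y = b}"

definition h_alarm :: "('n \<Rightarrow> bool) pmf \<Rightarrow> real \<Rightarrow> real \<Rightarrow> 'n \<Rightarrow> real" where
  "h_alarm ps eFA eFS k = obs_prob ps eFA eFS k False"

text \<open>Posterior system failure probability P[u=0 | y_k=b]; meaningful only when
 obs_prob ps eFA eFS k b > 0.\<close>
definition post_fail :: "('n::finite \<Rightarrow> bool) pmf \<Rightarrow> real \<Rightarrow> real \<Rightarrow> 'n \<Rightarrow> bool \<Rightarrow> real" where
  "post_fail ps eFA eFS k b =
     measure_pmf.prob (joint_pmf ps eFA eFS k) {(s, y). y = b \<and> \<not> parallel_phi s}
     / obs_prob ps eFA eFS k b"

definition LG_omega :: "(real \<Rightarrow> real) \<Rightarrow> ('n::finite \<Rightarrow> bool) pmf \<Rightarrow> real \<Rightarrow> real \<Rightarrow> 'n \<Rightarrow> real" where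
  "LG_omega l ps eFA eFS k =
     (if h_alarm ps eFA eFS k > 0
        then h_alarm ps eFA eFS k * l (post_fail ps eFA eFS k False) else 0)
   + (if 1 - h_alarm ps eFA eFS k > 0
        then (1 - h_alarm ps eFA eFS k) * l (post_fail ps eFA eFS k True) else 0)"

definition VoI_G :: "(real \<Rightarrow> real) \<Rightarrow> ('n::finite \<Rightarrow> bool) pmf \<Rightarrow> real \<Rightarrow> real \<Rightarrow> 'n \<Rightarrow> real" where
  "VoI_G l ps eFA eFS k = l (prior_fail ps) - LG_omega l ps eFA eFS k"

end

theory Submission
  imports Defs
begin

text \<open>A parallel system is down exactly when every component is, so
  P[u = 0, y_k = b] = P[y_k = b | s_k = 0] p_pi for every k. The posteriors therefore depend
  on k only through the alarm probability h_k = eFA + (1 - eFA - eFS) p_k, which grows with p_k: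
  P[u = 0 | y_k = 0] = (1 - eFS) p_pi / h_k decreases and P[u = 0 | y_k = 1] = eFS p_pi / (1 - h_k)
  increases, each staying on its side of p_pi. So a less reliable component has a narrower
  two-point posterior distribution with the same mean p_pi, and for concave l* comparing both
  with the chord of l* over the wider interval shows that its expected posterior loss is larger.\<close>

lemma measure_pmf_prob_bind_pmf:
  "measure_pmf.prob (bind_pmf M N) X = (\<integral>x. measure_pmf.prob (N x) X \<partial>M)"
  unfolding measure_pmf_bind
  by (rule measure_pmf.measure_bind[where N="count_space UNIV"])
     (auto simp: space_subprob_algebra measurable_def
           intro: prob_space_imp_subprob_space measure_pmf.prob_space_axioms)

lemma integral_pmf_affine_indicator:
  "(\<integral>s. a + d * indicator A s \<partial>measure_pmf p) = a + d * measure_pmf.prob p A"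
proof -
  have "integrable (measure_pmf p) (\<lambda>s. d * indicator A s :: real)"
    by (rule measure_pmf.integrable_const_bound[where B="\<bar>d\<bar>"]) (auto simp: indicator_def)
  then show ?thesis
    by (subst Bochner_Integration.integral_add) (auto simp del: integrable_mult_right_iff)
qed

lemma prob_joint_pmf:
  "measure_pmf.prob (joint_pmf ps eFA eFS k) {(s, y). y = b \<and> Q s}
   = (\<integral>s. (if Q s then pmf (obs_pmf eFA eFS (s k)) b else 0) \<partial>ps)"
  unfolding joint_pmf_def measure_pmf_prob_bind_pmf
proof (rule Bochner_Integration.integral_cong[OF refl])
  fix s
  have "(\<lambda>y. (s, y)) -` {(s, y). y = b \<and> Q s} = (if Q s then {b} else {})"
    by auto
  then show "measure_pmf.prob (map_pmf (\<lambda>y. (s, y)) (obs_pmf eFA eFS (s k))) {(s, y). y = b \<and> Q s}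
      = (if Q s then pmf (obs_pmf eFA eFS (s k)) b else 0)"
    by (simp add: measure_pmf_single)
qed

lemma h_alarm_eq:
  assumes "0 \<le> eFA" "eFA \<le> 1" "0 \<le> eFS" "eFS \<le> 1"
  shows "h_alarm ps eFA eFS k = eFA + (1 - eFA - eFS) * marg_fail ps k"
proof -
  have "h_alarm ps eFA eFS k = (\<integral>s. pmf (obs_pmf eFA eFS (s k)) False \<partial>ps)"
    using prob_joint_pmf[of ps eFA eFS k False "\<lambda>_. True"]
    by (simp add: h_alarm_def obs_prob_def)
  also have "\<dots> = (\<integral>s. eFA + (1 - eFA - eFS) * indicator {s. \<not> s k} s \<partial>ps)"
    using assms by (intro Bochner_Integration.integral_cong) (auto simp: obs_pmf_def)
  finally show ?thesis
    by (simp add: integral_pmf_affine_indicator marg_fail_def)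
qed

lemma obs_prob_silence: "obs_prob ps eFA eFS k True = 1 - h_alarm ps eFA eFS k"
proof -
  have "{(s, y). y = True} = space (joint_pmf ps eFA eFS k) - {(s, y). y = False}"
    by auto
  then show ?thesis
    unfolding h_alarm_def obs_prob_def by (metis measure_pmf.prob_compl sets_measure_pmf UNIV_I)
qed

lemma prob_joint_system_failure:
  "measure_pmf.prob (joint_pmf ps eFA eFS k) {(s, y). y = b \<and> \<not> parallel_phi s}
   = pmf (obs_pmf eFA eFS False) b * prior_fail ps"
proof -
  have "measure_pmf.prob (joint_pmf ps eFA eFS k) {(s, y). y = b \<and> \<not> parallel_phi s}
      = (\<integral>s. 0 + pmf (obs_pmf eFA eFS False) b * indicator {s. \<not> parallel_phi s} s \<partial>ps)"
    unfolding prob_joint_pmf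
    by (intro Bochner_Integration.integral_cong) (auto simp: parallel_phi_def)
  then show ?thesis
    by (simp add: integral_pmf_affine_indicator prior_fail_def)
qed

lemma prior_fail_le_marg_fail: "prior_fail ps \<le> marg_fail ps k"
  unfolding prior_fail_def marg_fail_def
  by (rule measure_pmf.finite_measure_mono) (auto simp: parallel_phi_def)

lemma h_alarm_bounds:
  assumes "0 \<le> eFA" "0 \<le> eFS" "eFA + eFS \<le> 1"
  shows "(1 - eFS) * prior_fail ps \<le> h_alarm ps eFA eFS k" "h_alarm ps eFA eFS k \<le> 1 - eFS"
proof -
  let ?m = "prior_fail ps" and ?p = "marg_fail ps k"
  have m: "0 \<le> ?m" "?m \<le> ?p" and p: "?p \<le> 1"
    using prior_fail_le_marg_fail[of ps k] by (simp_all add: prior_fail_def marg_fail_def)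
  have h: "h_alarm ps eFA eFS k = eFA + (1 - eFA - eFS) * ?p"
    using assms by (intro h_alarm_eq) auto
  have "(1 - eFA - eFS) * ?m \<le> (1 - eFA - eFS) * ?p" "eFA * ?m \<le> eFA"
    using assms m p by (auto intro: mult_left_mono mult_left_le)
  then show "(1 - eFS) * ?m \<le> h_alarm ps eFA eFS k"
    unfolding h by (simp add: algebra_simps)
  have "(1 - eFA - eFS) * ?p \<le> 1 - eFA - eFS"
    using assms p by (simp add: mult_left_le)
  then show "h_alarm ps eFA eFS k \<le> 1 - eFS"
    unfolding h by simp
qed

lemma h_alarm_mono:
  assumes "0 \<le> eFA" "0 \<le> eFS" "eFA + eFS \<le> 1" "marg_fail ps i \<le> marg_fail ps j"
  shows "h_alarm ps eFA eFS i \<le> h_alarm ps eFA eFS j"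
  using assms by (simp add: h_alarm_eq mult_left_mono)

text \<open>Under (1 - e) m \<le> h \<le> 1 - e a numerator below vanishes whenever its denominator
  does, so the junk value x / 0 = 0 is harmless and the lemmas need no positivity hypotheses.\<close>

definition posterior_alarm :: "real \<Rightarrow> real \<Rightarrow> real \<Rightarrow> real" where
  "posterior_alarm e m h = (1 - e) * m / h"

definition posterior_silence :: "real \<Rightarrow> real \<Rightarrow> real \<Rightarrow> real" where
  "posterior_silence e m h = e * m / (1 - h)"

definition posterior_loss :: "(real \<Rightarrow> real) \<Rightarrow> real \<Rightarrow> real \<Rightarrow> real \<Rightarrow> real" where
  "posterior_loss l e m h = h * l (posterior_alarm e m h) + (1 - h) * l (posterior_silence e m h)"

lemma post_fail_alarm:
  assumes "0 \<le> eFS" "eFS \<le> 1"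
  shows "post_fail ps eFA eFS k False = posterior_alarm eFS (prior_fail ps) (h_alarm ps eFA eFS k)"
  using assms unfolding post_fail_def prob_joint_system_failure
  by (simp add: obs_pmf_def posterior_alarm_def h_alarm_def)

lemma post_fail_silence:
  assumes "0 \<le> eFS" "eFS \<le> 1"
  shows "post_fail ps eFA eFS k True = posterior_silence eFS (prior_fail ps) (h_alarm ps eFA eFS k)"
  using assms unfolding post_fail_def prob_joint_system_failure obs_prob_silence
  by (simp add: obs_pmf_def posterior_silence_def)

lemma LG_omega_eq_posterior_loss:
  assumes "0 \<le> eFS" "eFS \<le> 1"
  shows "LG_omega l ps eFA eFS k = posterior_loss l eFS (prior_fail ps) (h_alarm ps eFA eFS k)"
proof -
  have "0 \<le> h_alarm ps eFA eFS k" "h_alarm ps eFA eFS k \<le> 1"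
    by (simp_all add: h_alarm_def obs_prob_def)
  then show ?thesis
    using assms by (auto simp: LG_omega_def posterior_loss_def post_fail_alarm post_fail_silence)
qed

context
  fixes e m :: real
  assumes e: "0 \<le> e" "e < 1" and m: "0 \<le> m"
begin

lemma posterior_silence_nonneg: "h \<le> 1 \<Longrightarrow> 0 \<le> posterior_silence e m h"
  using e m by (simp add: posterior_silence_def)

lemma posterior_silence_le_prior:
  assumes "h \<le> 1 - e"
  shows "posterior_silence e m h \<le> m"
proof (cases "h = 1")
  case False
  have "e * m \<le> m * (1 - h)"
    using assms m by (subst mult.commute) (intro mult_right_mono, auto)
  then show ?thesis
    using False assms e by (simp add: posterior_silence_def divide_le_eq)
qed (simp add: posterior_silence_def m)

lemma prior_le_posterior_alarm:
  assumes "(1 - e) * m \<le> h" "h \<le> 1 - e"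
  shows "m \<le> posterior_alarm e m h"
proof (cases "h = 0")
  case True
  then have "m = 0"
    using assms e m by (simp add: mult_le_0_iff)
  then show ?thesis
    by (simp add: posterior_alarm_def)
next
  case False
  have "0 \<le> (1 - e) * m"
    using e m by simp
  then have "0 < h"
    using False assms by linarith
  moreover have "m * h \<le> (1 - e) * m"
    using assms m by (subst mult.commute) (intro mult_right_mono, auto)
  ultimately show ?thesis
    by (simp add: posterior_alarm_def le_divide_eq)
qed

lemma posterior_alarm_le_one:
  assumes "(1 - e) * m \<le> h"
  shows "posterior_alarm e m h \<le> 1"
proof -
  have "0 \<le> (1 - e) * m"
    using e m by simp
  then show ?thesis
    using assms by (cases "h = 0") (simp_all add: posterior_alarm_def divide_le_eq)
qed

lemma posterior_alarm_antimono:
  assumes "(1 - e) * m \<le> hi" "hi \<le> hj"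
  shows "posterior_alarm e m hj \<le> posterior_alarm e m hi"
proof -
  have num: "0 \<le> (1 - e) * m"
    using e m by simp
  show ?thesis
  proof (cases "hi = 0")
    case True
    then have "(1 - e) * m = 0"
      using assms num by linarith
    then show ?thesis
      unfolding posterior_alarm_def by (metis div_0 order_refl)
  next
    case False
    then have "0 < hi"
      using assms num by linarith
    then show ?thesis
      using assms num by (simp add: posterior_alarm_def divide_left_mono)
  qed
qed

lemma posterior_silence_mono:
  assumes "hi \<le> hj" "hj \<le> 1 - e"
  shows "posterior_silence e m hi \<le> posterior_silence e m hj"
  using assms e m by (cases "hj = 1") (auto simp: posterior_silence_def intro: divide_left_mono)

lemma posterior_mean:
  assumes "(1 - e) * m \<le> h" "h \<le> 1 - e"
  shows "h * posterior_alarm e m h + (1 - h) * posterior_silence e m h = m"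
proof -
  have "h * posterior_alarm e m h = (1 - e) * m"
    using assms e m by (cases "h = 0") (auto simp: posterior_alarm_def mult_le_0_iff)
  moreover have "(1 - h) * posterior_silence e m h = e * m"
    using assms e by (cases "h = 1") (auto simp: posterior_silence_def)
  ultimately show ?thesis
    by (simp add: algebra_simps)
qed

end

lemma concave_on_two_point_spread:
  fixes l :: "real \<Rightarrow> real"
  assumes l: "concave_on {x1..x0} l" and y: "y0 \<in> {x1..x0}" "y1 \<in> {x1..x0}"
    and w: "0 \<le> w" "w \<le> 1"
    and mean: "v * x0 + (1 - v) * x1 = w * y0 + (1 - w) * y1"
  shows "v * l x0 + (1 - v) * l x1 \<le> w * l y0 + (1 - w) * l y1"
proof -
  define slope where "slope = (l x0 - l x1) / (x0 - x1)"
  define chord where "chord y = slope * (y - x1) + l x1" for y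
  have below: "chord y \<le> l y" if "y \<in> {x1..x0}" for y
    using concave_onD_Icc'[OF l that] by (simp add: chord_def slope_def)
  have ends: "chord x0 = l x0" "chord x1 = l x1"
    by (cases "x0 = x1") (simp_all add: chord_def slope_def)
  have affine: "chord (a * p + (1 - a) * q) = a * chord p + (1 - a) * chord q" for a p q
    by (simp add: chord_def algebra_simps)
  have "v * l x0 + (1 - v) * l x1 = chord (v * x0 + (1 - v) * x1)"
    by (simp only: affine ends)
  also have "\<dots> = w * chord y0 + (1 - w) * chord y1"
    by (simp only: mean affine)
  also have "\<dots> \<le> w * l y0 + (1 - w) * l y1"
    using below y w by (intro add_mono mult_left_mono) auto
  finally show ?thesis .
qed

lemma posterior_loss_mono:
  fixes l :: "real \<Rightarrow> real"
  assumes l: "concave_on {0..1} l" and e: "0 \<le> e" "e < 1" and m: "0 \<le> m"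
    and hi: "(1 - e) * m \<le> hi" and hij: "hi \<le> hj" and hj: "hj \<le> 1 - e"
  shows "posterior_loss l e m hi \<le> posterior_loss l e m hj"
proof -
  let ?x0 = "posterior_alarm e m hi" and ?x1 = "posterior_silence e m hi"
  let ?y0 = "posterior_alarm e m hj" and ?y1 = "posterior_silence e m hj"
  have hi': "hi \<le> 1 - e" and hj': "(1 - e) * m \<le> hj"
    using hi hij hj by linarith+
  have "?x1 \<le> m" "m \<le> ?x0" "m \<le> ?y0" "?y0 \<le> ?x0" "?y1 \<le> m" "?x1 \<le> ?y1"
    using posterior_silence_le_prior[OF e m hi'] prior_le_posterior_alarm[OF e m hi hi']
      prior_le_posterior_alarm[OF e m hj' hj] posterior_alarm_antimono[OF e m hi hij]
      posterior_silence_le_prior[OF e m hj] posterior_silence_mono[OF e m hij hj]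
    by auto
  then have "?y0 \<in> {?x1..?x0}" "?y1 \<in> {?x1..?x0}"
    by auto
  moreover have "concave_on {?x1..?x0} l"
  proof -
    have "{?x1..?x0} \<subseteq> {0..1}"
      using posterior_silence_nonneg[OF e m, of hi] posterior_alarm_le_one[OF e m hi] hi' e
      by auto
    then show ?thesis
      using l convex_on_subset convex_real_interval(5) unfolding concave_on_def by blast
  qed
  moreover have "hi * ?x0 + (1 - hi) * ?x1 = hj * ?y0 + (1 - hj) * ?y1"
    using posterior_mean[OF e m hi hi'] posterior_mean[OF e m hj' hj] by simp
  moreover have "0 \<le> hj" "hj \<le> 1"
    using mult_nonneg_nonneg[of "1 - e" m] e m hj hj' by linarith+
  ultimately show ?thesis
    unfolding posterior_loss_def by (intro concave_on_two_point_spread)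
qed

lemma post_fail_nested:
  assumes "0 \<le> eFA" "0 \<le> eFS" "eFS < 1" "eFA + eFS \<le> 1"
    and "marg_fail ps i \<le> marg_fail ps j"
  shows "post_fail ps eFA eFS i True \<le> post_fail ps eFA eFS j True"
    and "post_fail ps eFA eFS j True \<le> post_fail ps eFA eFS j False"
    and "post_fail ps eFA eFS j False \<le> post_fail ps eFA eFS i False"
proof -
  let ?m = "prior_fail ps"
  have e: "0 \<le> eFS" "eFS < 1" and m: "0 \<le> ?m"
    using assms by (simp_all add: prior_fail_def)
  note bounds = h_alarm_bounds[OF assms(1,2,4), of ps]
  note hij = h_alarm_mono[OF assms(1,2,4,5)]
  note post = post_fail_alarm[of eFS] post_fail_silence[of eFS]
  show "post_fail ps eFA eFS i True \<le> post_fail ps eFA eFS j True"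
    using posterior_silence_mono[OF e m hij bounds(2)] assms by (simp add: post)
  show "post_fail ps eFA eFS j True \<le> post_fail ps eFA eFS j False"
    using order.trans[OF posterior_silence_le_prior[OF e m bounds(2)]
        prior_le_posterior_alarm[OF e m bounds]] assms
    by (simp add: post)
  show "post_fail ps eFA eFS j False \<le> post_fail ps eFA eFS i False"
    using posterior_alarm_antimono[OF e m bounds(1) hij] assms by (simp add: post)
qed

lemma VoI_G_antimono:
  fixes l :: "real \<Rightarrow> real"
  assumes "0 \<le> eFA" "0 \<le> eFS" "eFS < 1" "eFA + eFS \<le> 1"
    and "marg_fail ps i \<le> marg_fail ps j" and l: "concave_on {0..1} l"
  shows "VoI_G l ps eFA eFS j \<le> VoI_G l ps eFA eFS i"
proof -
  have "posterior_loss l eFS (prior_fail ps) (h_alarm ps eFA eFS i)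
      \<le> posterior_loss l eFS (prior_fail ps) (h_alarm ps eFA eFS j)"
    using assms h_alarm_bounds[OF assms(1,2,4)] h_alarm_mono[OF assms(1,2,4,5)]
    by (intro posterior_loss_mono[OF l]) (simp_all add: prior_fail_def)
  then show ?thesis
    using assms by (simp add: VoI_G_def LG_omega_eq_posterior_loss)
qed

theorem mainTheorem2:
  fixes ps :: "('n::finite \<Rightarrow> bool) pmf" and eFA eFS :: real
  assumes "0 \<le> eFA" "eFA < 1/2" "0 \<le> eFS" "eFS < 1/2"
  shows "(\<forall>i j. marg_fail ps i \<le> marg_fail ps j \<longrightarrow>
            ((obs_prob ps eFA eFS i True > 0 \<and> obs_prob ps eFA eFS j True > 0 \<longrightarrow>
                post_fail ps eFA eFS i True \<le> post_fail ps eFA eFS j True)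
           \<and> (obs_prob ps eFA eFS j True > 0 \<and> obs_prob ps eFA eFS j False > 0 \<longrightarrow>
                post_fail ps eFA eFS j True \<le> post_fail ps eFA eFS j False)
           \<and> (obs_prob ps eFA eFS j False > 0 \<and> obs_prob ps eFA eFS i False > 0 \<longrightarrow>
                post_fail ps eFA eFS j False \<le> post_fail ps eFA eFS i False)
           \<and> (\<forall>l. concave_on {0..1} l \<longrightarrow> VoI_G l ps eFA eFS i \<ge> VoI_G l ps eFA eFS j)))
       \<and> (\<forall>i. (\<forall>k. marg_fail ps i \<le> marg_fail ps k) \<longrightarrow>
            (\<forall>l. concave_on {0..1} l \<longrightarrow> (\<forall>k. VoI_G l ps eFA eFS i \<ge> VoI_G l ps eFA eFS k)))"
proof -
  have eps: "0 \<le> eFA" "0 \<le> eFS" "eFS < 1" "eFA + eFS \<le> 1"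
    using assms by linarith+
  show ?thesis
    by (intro conjI allI impI) (use post_fail_nested[OF eps] VoI_G_antimono[OF eps] in blast)+
qed

end
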